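(* Let $T>0$, $\mathcal{R}=\frac{2\pi}{T}$, and assume that $\mathcal{R}^{-2}=\left(\frac{T}{2\pi}\right)^2$ has irrationality measure equal to $2$. For $m,k\in\mathbb{Z}$ set \[ \lambda_2^+(m,k)=\left|\mathcal{R}|m|-\sqrt{1+k^2}\right|. \] Then there exists a constant $\widetilde{c}>0$ such that $\lambda_2^+(m,k)>\frac{\widetilde{c}}{(1+k^2)^2}$ for all $m,k\in\mathbb{Z}$.
   Context: The irrationality measure of a real number $r$ is the infimum of all $\rho$ for which there exists a constant $c$ such that $\frac{c}{q^\rho}<|r-\frac{p}{q}|$ for all $\frac{p}{q}\in\mathbb{Q}$. (In the paper, $\lambda_2^+(m,k)$ is the smaller positive eigenvalue of the Hermitian matrix $\mathrm{diag}(1,1,-1,-1)-\mathcal{R}imM_1-ikM_2$.) *)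

theory Defs
  imports Complex_Main "HOL-Library.Extended_Real"
begin

text \<open>Taken in the extended reals, so that the
infimum of the empty set is +infinity.\<close>
definition irrationality_measure :: "real \<Rightarrow> ereal" where
  "irrationality_measure r =
     Inf (ereal ` {\<rho>. \<exists>c>0. \<forall>p q::int. q > 0 \<longrightarrow>
                     c / (real_of_int q) powr \<rho> < \<bar>r - real_of_int p / real_of_int q\<bar>})"

definition lambda2p :: "real \<Rightarrow> int \<Rightarrow> int \<Rightarrow> real" where
  "lambda2p R m k = \<bar>R * real_of_int \<bar>m\<bar> - sqrt (1 + real_of_int k ^ 2)\<bar>"

end

theory Submission
  imports Defs
begin

text \<open>Since the irrationality measure of \<open>R\<^sup>-\<^sup>2\<close> is below \<open>5/2\<close>, rational
  approximations \<open>m\<^sup>2/(1+k\<^sup>2)\<close> of \<open>R\<^sup>-\<^sup>2\<close> satisfy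
  \<open>|R\<^sup>2m\<^sup>2 - n| \<ge> C \<surd>n / n\<^sup>2\<close> with \<open>n = 1+k\<^sup>2\<close>. Factoring
  \<open>R\<^sup>2m\<^sup>2 - n = (R|m| - \<surd>n)(R|m| + \<surd>n)\<close>, and noting that the second factor is
  at most \<open>3\<surd>n\<close> unless \<open>\<lambda>\<^sub>2\<^sup>+(m,k) \<ge> 1\<close> anyway, gives
  \<open>\<lambda>\<^sub>2\<^sup>+(m,k) \<ge> C/(3n\<^sup>2)\<close>.\<close>

lemma irrationality_measure_less_imp_approx_bound:
  assumes "irrationality_measure r < ereal \<rho>"
  obtains c where "c > 0"
    and "\<And>p q::int. q > 0 \<Longrightarrow> c / real_of_int q powr \<rho> < \<bar>r - real_of_int p / real_of_int q\<bar>"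
proof -
  obtain \<rho>\<^sub>0 c where "\<rho>\<^sub>0 < \<rho>" "c > 0" and bound:
    "\<forall>p q::int. q > 0 \<longrightarrow> c / real_of_int q powr \<rho>\<^sub>0 < \<bar>r - real_of_int p / real_of_int q\<bar>"
    using assms by (auto simp: irrationality_measure_def Inf_less_iff)
  show thesis
  proof (rule that[OF \<open>c > 0\<close>])
    fix p q :: int
    assume "q > 0"
    then have "real_of_int q powr \<rho>\<^sub>0 \<le> real_of_int q powr \<rho>"
      using \<open>\<rho>\<^sub>0 < \<rho>\<close> by (intro powr_mono) auto
    then have "c / real_of_int q powr \<rho> \<le> c / real_of_int q powr \<rho>\<^sub>0"
      using \<open>c > 0\<close> \<open>q > 0\<close> by (intro divide_left_mono) auto
    also have "\<dots> < \<bar>r - real_of_int p / real_of_int q\<bar>"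
      using bound \<open>q > 0\<close> by blast
    finally show "c / real_of_int q powr \<rho> < \<bar>r - real_of_int p / real_of_int q\<bar>" .
  qed
qed

lemma abs_diff_sqrt_ge_min:
  fixes a n d :: real
  assumes "a \<ge> 0" "n \<ge> 1" "d \<ge> 0" "\<bar>a\<^sup>2 - n\<bar> \<ge> d * sqrt n"
  shows "\<bar>a - sqrt n\<bar> \<ge> min 1 (d / 3)"
proof (cases "\<bar>a - sqrt n\<bar> \<ge> 1")
  case False
  have "sqrt n \<ge> 1" using \<open>n \<ge> 1\<close> by simp
  have sum_pos: "a + sqrt n > 0" using \<open>a \<ge> 0\<close> \<open>sqrt n \<ge> 1\<close> by linarith
  have sum_le: "a + sqrt n \<le> 3 * sqrt n" using False \<open>sqrt n \<ge> 1\<close> by linarith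
  have "a\<^sup>2 - n = (a - sqrt n) * (a + sqrt n)"
    using \<open>n \<ge> 1\<close> by (simp add: power2_eq_square algebra_simps)
  then have "\<bar>a\<^sup>2 - n\<bar> = \<bar>a - sqrt n\<bar> * (a + sqrt n)"
    using sum_pos by (simp add: abs_mult)
  also have "\<dots> \<le> \<bar>a - sqrt n\<bar> * (3 * sqrt n)"
    using sum_le by (simp add: mult_left_mono)
  finally have "d * sqrt n \<le> \<bar>a - sqrt n\<bar> * (3 * sqrt n)"
    using assms(4) by linarith
  then have "d / 3 \<le> \<bar>a - sqrt n\<bar>"
    using \<open>sqrt n \<ge> 1\<close> by (simp add: field_simps)
  then show ?thesis by (rule min.coboundedI2)
qed simp

lemma lambda2p_lower_bound:
  fixes R c :: real
  assumes "R > 0" "c > 0"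
    and approx: "\<And>p q::int. q > 0 \<Longrightarrow>
      c / real_of_int q powr (5/2) < \<bar>R powr (-2) - real_of_int p / real_of_int q\<bar>"
  shows "lambda2p R m k \<ge> min 1 (R\<^sup>2 * c / 3) / (1 + real_of_int k ^ 2)\<^sup>2"
proof -
  define n where "n = 1 + real_of_int k ^ 2"
  define a where "a = R * real_of_int \<bar>m\<bar>"
  have "n \<ge> 1" by (simp add: n_def)
  have "n powr (5/2) = n powr (2 + 1/2)" by simp
  also have "\<dots> = n powr 2 * n powr (1/2)" by (rule powr_add)
  also have "\<dots> = n\<^sup>2 * sqrt n"
    using \<open>n \<ge> 1\<close> by (simp add: powr_half_sqrt powr_numeral)
  finally have n_powr: "n powr (5/2) = n\<^sup>2 * sqrt n" .
  have "R powr (-2) - real_of_int (m\<^sup>2) / n = (n - a\<^sup>2) / (R\<^sup>2 * n)"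
    using \<open>R > 0\<close> \<open>n \<ge> 1\<close>
    by (simp add: a_def powr_minus powr_numeral power_mult_distrib field_simps)
  moreover have "(1 + k\<^sup>2 :: int) > 0" by (simp add: add_pos_nonneg)
  ultimately have "c / n powr (5/2) < \<bar>n - a\<^sup>2\<bar> / (R\<^sup>2 * n)"
    using approx[of "1 + k\<^sup>2" "m\<^sup>2"] \<open>R > 0\<close> by (simp add: n_def abs_div)
  then have "R\<^sup>2 * c / (n * sqrt n) < \<bar>a\<^sup>2 - n\<bar>"
    using \<open>R > 0\<close> \<open>n \<ge> 1\<close> by (simp add: n_powr field_simps power2_eq_square abs_minus_commute)
  moreover have "R\<^sup>2 * c / (n * sqrt n) = R\<^sup>2 * c / n\<^sup>2 * sqrt n"
    using \<open>n \<ge> 1\<close> real_sqrt_mult_self[of n] by (simp add: field_simps power2_eq_square)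
  ultimately have sq_bound: "R\<^sup>2 * c / n\<^sup>2 * sqrt n \<le> \<bar>a\<^sup>2 - n\<bar>" by simp
  have "n\<^sup>2 \<ge> 1" using \<open>n \<ge> 1\<close> by (simp add: one_le_power)
  then have "min 1 (R\<^sup>2 * c / 3) / n\<^sup>2 \<le> min 1 (R\<^sup>2 * c / n\<^sup>2 / 3)"
    by (auto simp: divide_le_eq min_le_iff_disj intro: divide_right_mono)
  also have "\<dots> \<le> lambda2p R m k"
    using abs_diff_sqrt_ge_min[OF _ \<open>n \<ge> 1\<close> _ sq_bound] \<open>R > 0\<close> \<open>c > 0\<close> \<open>n \<ge> 1\<close>
    by (simp add: lambda2p_def a_def n_def)
  finally show ?thesis by (simp only: n_def)
qed

theorem proposition5p2:
  fixes T R :: real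
  assumes "T > 0"
    and "R = 2 * pi / T"
    and "irrationality_measure (R powr (-2)) = 2"
  shows "\<exists>c>0. \<forall>m k :: int. lambda2p R m k > c / (1 + real_of_int k ^ 2) ^ 2"
proof -
  have "R > 0" using assms(1,2) by simp
  obtain c where "c > 0" and approx: "\<And>p q::int. q > 0 \<Longrightarrow>
      c / real_of_int q powr (5/2) < \<bar>R powr (-2) - real_of_int p / real_of_int q\<bar>"
    using irrationality_measure_less_imp_approx_bound[of "R powr (-2)" "5/2"] assms(3) by auto
  define C where "C = min 1 (R\<^sup>2 * c / 3)"
  have "C > 0" using \<open>R > 0\<close> \<open>c > 0\<close> by (simp add: C_def)
  have "lambda2p R m k > (C / 2) / (1 + real_of_int k ^ 2) ^ 2" for m k
  proof -
    have "1 + real_of_int k ^ 2 > 0" by (simp add: add_pos_nonneg)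
    have "(C / 2) / (1 + real_of_int k ^ 2) ^ 2 < C / (1 + real_of_int k ^ 2) ^ 2"
      using \<open>C > 0\<close> \<open>1 + real_of_int k ^ 2 > 0\<close> by (intro divide_strict_right_mono) auto
    also have "\<dots> \<le> lambda2p R m k"
      using lambda2p_lower_bound[OF \<open>R > 0\<close> \<open>c > 0\<close> approx] by (simp add: C_def)
    finally show ?thesis .
  qed
  moreover have "C / 2 > 0" using \<open>C > 0\<close> by simp
  ultimately show ?thesis by blast
qed

end
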